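(* Let $c>1$ be a constant. There is a constant $d$ (depending only on $c$) such that for every convex $c$-fat polygon $P$ and every line $M$ cutting $P$ at two points $a$ and $b$ of its boundary, the length $s$ of the shorter of the two parts of the perimeter of $P$ between $a$ and $b$ satisfies $s\le d\cdot|ab|$.
   Context: A polygon is $c$-fat if the ratio of the radius of the smallest disc containing it to the radius of the largest disc contained in it is at most $c$. $|ab|$ denotes the Euclidean distance between $a$ and $b$. *)

theory Defs
  imports "HOL-Analysis.Analysis"
begin

text \<open>A convex polygon is given by n >= 3 vertices v 0, ..., v (n-1) listed in
  counterclockwise order, in strictly convex position: for every edge
  v i -> v (i+1 mod n), all other vertices lie strictly to its left.\<close>

definition cross :: "complex \<Rightarrow> complex \<Rightarrow> real" where
  "cross z w = Im (cnj z * w)"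

definition convex_polygon :: "nat \<Rightarrow> (nat \<Rightarrow> complex) \<Rightarrow> bool" where
  "convex_polygon n v \<longleftrightarrow> n \<ge> 3 \<and>
     (\<forall>i<n. \<forall>j<n. j \<noteq> i \<and> j \<noteq> Suc i mod n \<longrightarrow>
        cross (v (Suc i mod n) - v i) (v j - v i) > 0)"

definition polygon_region :: "nat \<Rightarrow> (nat \<Rightarrow> complex) \<Rightarrow> complex set" where
  "polygon_region n v = convex hull (v ` {..<n})"

definition edge_len :: "nat \<Rightarrow> (nat \<Rightarrow> complex) \<Rightarrow> nat \<Rightarrow> real" where
  "edge_len n v i = dist (v i) (v (Suc i mod n))"

definition cum_len :: "nat \<Rightarrow> (nat \<Rightarrow> complex) \<Rightarrow> nat \<Rightarrow> real" where
  "cum_len n v i = (\<Sum>k<i. edge_len n v k)"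

definition perimeter :: "nat \<Rightarrow> (nat \<Rightarrow> complex) \<Rightarrow> real" where
  "perimeter n v = cum_len n v n"

definition at_arclen :: "nat \<Rightarrow> (nat \<Rightarrow> complex) \<Rightarrow> real \<Rightarrow> complex \<Rightarrow> bool" where
  "at_arclen n v s p \<longleftrightarrow> 0 \<le> s \<and> s < perimeter n v \<and>
     (\<exists>i<n. cum_len n v i \<le> s \<and> s \<le> cum_len n v (Suc i) \<and>
        p = v i + of_real ((s - cum_len n v i) / edge_len n v i) * (v (Suc i mod n) - v i))"

definition circumradius :: "complex set \<Rightarrow> real" where
  "circumradius S = Inf {R. \<exists>x. S \<subseteq> cball x R}"

definition inradius :: "complex set \<Rightarrow> real" where
  "inradius S = Sup {r. \<exists>y. cball y r \<subseteq> S}"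

definition fat :: "real \<Rightarrow> complex set \<Rightarrow> bool" where
  "fat c S \<longleftrightarrow> circumradius S / inradius S \<le> c"

definition is_line :: "complex set \<Rightarrow> bool" where
  "is_line M \<longleftrightarrow> (\<exists>p u. u \<noteq> 0 \<and> M = {p + of_real t * u | t. True})"

end

theory Submission
  imports Defs
begin

(* Fix a disc of radius r inside P and orient M so that its centre lies weakly on the negative
  side of M.  The two boundary arcs between a and b meet M only at their ends, so each lies on
  one side of M; they cannot both lie on the negative side, for then P would too and the
  midpoint of ab would be a boundary point of P on M.  So one arc lies on the non-negative side.
  Seen from the centre o, moved a further r/2 away from M, every point of that arc is at height
  between r/2 and the diameter D of P, and every edge is at distance at least r/2.  Hence the
  central projection from o onto a line parallel to M moves monotonically along the arc, by at
  least (r/2) l / D^2 along a piece of length l, while the projections of a and b are only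
  2|ab|/r apart.  Thus the arc has length at most 4 D^2 |ab| / r^2, and fatness bounds D/r. *)

lemma cross_conv_inner: "cross w z = (\<i> * w) \<bullet> z"
  by (simp add: cross_def inner_complex_def)

lemma cross_add_right: "cross w (x + y) = cross w x + cross w y"
  by (simp add: cross_def algebra_simps)

lemma cross_diff_right: "cross w (x - y) = cross w x - cross w y"
  by (simp add: cross_def algebra_simps)

lemma cross_scale_right: "cross w (of_real t * z) = t * cross w z"
  by (simp add: cross_def algebra_simps)

lemma cross_self [simp]: "cross w w = 0"
  by (simp add: cross_def)

lemma cross_zero_right [simp]: "cross w 0 = 0"
  by (simp add: cross_def)

lemma cross_swap: "cross w z = - cross z w"
  by (simp add: cross_def)

lemma cross_minus_left: "cross (- w) z = - cross w z"
  by (simp add: cross_def)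

lemma cross_i_mult_right: "cross w (\<i> * w) = (cmod w)\<^sup>2"
  by (simp only: cross_def cmod_power2) (simp add: power2_eq_square)

lemma cross_frame_identity:
  "cross p q * (cmod u)\<^sup>2 = (u \<bullet> p) * cross u q - cross u p * (u \<bullet> q)"
  by (simp only: cmod_power2) (simp add: cross_def inner_complex_def algebra_simps power2_eq_square)

lemma cross_parallel:
  assumes "w \<noteq> 0" "cross w p = 0" "cross w q = 0"
  shows "cross p q = 0"
  using cross_frame_identity[of p q w] assms by simp

lemma convex_cross_halfplane: "convex {z. 0 \<le> cross w (z - p)}"
  using convex_halfspace_ge[of "cross w p" "\<i> * w"]
  by (simp add: cross_conv_inner inner_diff_right)

lemma cross_zero_notin_interior:
  assumes "w \<noteq> 0" "S \<subseteq> {z. 0 \<le> cross w (z - p)}" "cross w (m - p) = 0"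
  shows "m \<notin> interior S"
proof
  assume "m \<in> interior S"
  also have "interior S \<subseteq> interior {z. cross w p \<le> (\<i> * w) \<bullet> z}"
    using assms(2) by (intro interior_mono) (auto simp: cross_conv_inner inner_diff_right)
  also have "\<dots> = {z. cross w p < (\<i> * w) \<bullet> z}"
    using assms(1) by (intro interior_halfspace_ge) simp
  finally show False
    using assms(3) by (simp add: cross_conv_inner inner_diff_right)
qed

lemma line_contains_parallel:
  assumes "is_line M" "a \<in> M" "b \<in> M" "a \<noteq> b"
    and "u \<noteq> 0" "cross u (b - a) = 0" "cross u (z - a) = 0"
  shows "z \<in> M"
proof -
  obtain p w where "w \<noteq> 0" and M: "M = {p + of_real t * w | t. True}"
    using assms(1) unfolding is_line_def by blast
  then obtain t1 t2 where a: "a = p + of_real t1 * w" and b: "b = p + of_real t2 * w"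
    using assms(2,3) by blast
  have "cross w (b - a) = 0"
    unfolding a b by (simp add: cross_def algebra_simps)
  moreover have "cross (b - a) (z - a) = 0"
    using assms(5-7) by (rule cross_parallel)
  ultimately have "cross w (z - a) = 0"
    using cross_parallel[of "b - a" w "z - a"] assms(4) by (simp add: cross_swap[of w])
  define q where "q = Re (cnj w * (z - a))"
  have "cnj w * (z - a) = of_real q"
    using \<open>cross w (z - a) = 0\<close> by (simp add: q_def cross_def complex_eq_iff)
  then have "of_real ((cmod w)\<^sup>2) * (z - a) = of_real q * w"
    unfolding complex_norm_square by (metis mult.assoc mult.commute)
  then have "z - a = of_real (q / (cmod w)\<^sup>2) * w"
    using \<open>w \<noteq> 0\<close> by (simp add: field_simps)
  then have "z = p + of_real (t1 + q / (cmod w)\<^sup>2) * w"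
    using a by (simp add: algebra_simps)
  then show ?thesis
    unfolding M by blast
qed

lemma abs_cross_le: "\<bar>cross u w\<bar> \<le> cmod u * cmod w"
  using Cauchy_Schwarz_ineq2[of "\<i> * u" w] by (simp add: cross_conv_inner norm_mult)

lemma unit_parallel_with_sign:
  assumes "p \<noteq> 0"
  obtains u where "cmod u = 1" "cross u p = 0" "cross u q \<le> 0"
proof -
  define u0 where "u0 = p / of_real (cmod p)"
  have u0: "cmod u0 = 1" "cross u0 p = 0"
    using assms by (simp_all add: u0_def norm_divide cross_def)
  show ?thesis
  proof (cases "cross u0 q \<le> 0")
    case True
    then show ?thesis
      using u0 that by blast
  next
    case False
    then show ?thesis
      using u0 that[of "- u0"] by (simp add: cross_minus_left)
  qed
qed

lemma secant_not_supporting: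
  assumes "convex S" "closed S" "is_line M" "M \<inter> frontier S = {a, b}" "a \<noteq> b"
    and "u \<noteq> 0" "cross u (b - a) = 0"
  shows "\<not> S \<subseteq> {z. 0 \<le> cross u (z - a)}"
proof
  assume S: "S \<subseteq> {z. 0 \<le> cross u (z - a)}"
  define m where "m = (1/2) *\<^sub>R a + (1/2) *\<^sub>R b"
  have ab: "a \<in> S" "b \<in> S" "a \<in> M" "b \<in> M"
    using assms(2,4) frontier_subset_closed by auto
  have "m \<in> S"
    unfolding m_def using ab by (intro convexD[OF assms(1)]) auto
  have ma: "m - a = of_real (1/2) * (b - a)" "m - b = of_real (1/2) * (a - b)"
    by (simp_all add: m_def scaleR_conv_of_real algebra_simps)
  then have "cross u (m - a) = 0"
    unfolding ma(1) cross_scale_right using assms(7) by simp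
  then have "m \<notin> interior S"
    using assms(6) S by (rule cross_zero_notin_interior[rotated 2])
  then have "m \<in> frontier S"
    using \<open>m \<in> S\<close> closure_subset by (auto simp: frontier_def)
  moreover have "m \<in> M"
    using line_contains_parallel[OF assms(3) ab(3,4) assms(5,6,7) \<open>cross u (m - a) = 0\<close>] .
  moreover have "m \<noteq> a" "m \<noteq> b"
    using assms(5) ma by auto
  ultimately show False
    using assms(4) by blast
qed

lemma add_mod_neq:
  fixes k m n :: nat
  assumes "k < n" "0 < m" "m < n"
  shows "(k + m) mod n \<noteq> k"
proof
  assume "(k + m) mod n = k"
  then have "n dvd m"
    using assms(1) mod_eq_dvd_iff_nat[of k "k + m" n] by simp
  then show False
    using assms(2,3) by (simp add: nat_dvd_not_less)
qed

lemma continuous_on_sign_between_zeros: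
  fixes f :: "real \<Rightarrow> real"
  assumes "continuous_on {l..r} f" "f l = 0" "f r = 0" "\<And>s. l < s \<Longrightarrow> s < r \<Longrightarrow> f s \<noteq> 0"
  shows "(\<forall>s\<in>{l..r}. 0 \<le> f s) \<or> (\<forall>s\<in>{l..r}. f s \<le> 0)"
proof (rule ccontr)
  assume "\<not> ?thesis"
  then obtain s1 s2 where s: "s1 \<in> {l..r}" "f s1 < 0" "s2 \<in> {l..r}" "0 < f s2"
    by (auto simp: not_le)
  have inside: "l < s1" "s1 < r" "l < s2" "s2 < r"
    using s assms(2,3) by (auto simp: less_eq_real_def)
  have cont: "continuous_on {x..y} f" if "l \<le> x" "y \<le> r" for x y
    using that by (intro continuous_on_subset[OF assms(1)]) auto
  obtain t where "min s1 s2 \<le> t" "t \<le> max s1 s2" "f t = 0"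
  proof (cases "s1 \<le> s2")
    case True
    then show ?thesis
      using IVT'[of f s1 0 s2] s cont[of s1 s2] inside that by auto
  next
    case False
    then show ?thesis
      using IVT2'[of f s1 0 s2] s cont[of s2 s1] inside that by auto
  qed
  then show False
    using inside assms(4)[of t] by linarith
qed

lemma antimono_on_partition:
  fixes G :: "real \<Rightarrow> real" and c :: "nat \<Rightarrow> real"
  assumes "\<And>k. k < N \<Longrightarrow> antimono_on ({c k..c (Suc k)} \<inter> {l..r}) G"
  shows "antimono_on ({c 0..c N} \<inter> {l..r}) G"
  using assms
proof (induction N)
  case 0
  show ?case
    by (rule monotone_onI) auto
next
  case (Suc N)
  have IH: "antimono_on ({c 0..c N} \<inter> {l..r}) G"
    using Suc by simp
  have last: "antimono_on ({c N..c (Suc N)} \<inter> {l..r}) G"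
    using Suc.prems by simp
  show ?case
  proof (rule monotone_onI)
    fix s' s
    assume s': "s' \<in> {c 0..c (Suc N)} \<inter> {l..r}" and s: "s \<in> {c 0..c (Suc N)} \<inter> {l..r}"
      and "s' \<le> s"
    consider "s \<le> c N" | "c N \<le> s'" | "s' < c N" "c N < s"
      by linarith
    then show "G s \<le> G s'"
    proof cases
      case 1
      show ?thesis
        by (rule monotone_onD[OF IH _ _ \<open>s' \<le> s\<close>]) (use s s' 1 \<open>s' \<le> s\<close> in auto)
    next
      case 2
      show ?thesis
        by (rule monotone_onD[OF last _ _ \<open>s' \<le> s\<close>]) (use s s' 2 \<open>s' \<le> s\<close> in auto)
    next
      case 3
      have "G s \<le> G (c N)"
        by (rule monotone_onD[OF last]) (use s s' 3 in auto)
      also have "G (c N) \<le> G s'"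
        by (rule monotone_onD[OF IH]) (use s s' 3 in auto)
      finally show ?thesis .
    qed
  qed
qed

text \<open>Central projection from z0 onto the line parallel to u at distance 1 from z0:
  the abscissa, in the frame (u, i u) centred at z0, of the point where the ray
  from z0 through z meets that line.\<close>
definition central_proj :: "complex \<Rightarrow> complex \<Rightarrow> complex \<Rightarrow> real" where
  "central_proj z0 u z = (u \<bullet> (z - z0)) / cross u (z - z0)"

lemma cross_eq_central_proj_diff:
  assumes "cmod u = 1" "cross u (p - z0) \<noteq> 0" "cross u (q - z0) \<noteq> 0"
  shows "cross (p - z0) (q - z0) =
    cross u (p - z0) * cross u (q - z0) * (central_proj z0 u p - central_proj z0 u q)"
proof -
  have "cross u (p - z0) * cross u (q - z0) * (central_proj z0 u p - central_proj z0 u q) =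
      (u \<bullet> (p - z0)) * cross u (q - z0) - cross u (p - z0) * (u \<bullet> (q - z0))"
    using assms(2,3) by (simp add: central_proj_def field_simps)
  then show ?thesis
    using cross_frame_identity[of "p - z0" "q - z0" u] assms(1) by simp
qed

lemma chord_le_central_proj_diff:
  assumes "cmod u = 1" "0 \<le> r"
    and "0 < cross u (p - z0)" "cross u (p - z0) \<le> D"
    and "0 < cross u (q - z0)" "cross u (q - z0) \<le> D"
    and chord: "r * dist p q \<le> cross (p - z0) (q - z0)"
  shows "r * dist p q \<le> D\<^sup>2 * (central_proj z0 u p - central_proj z0 u q)"
proof -
  let ?yp = "cross u (p - z0)" and ?yq = "cross u (q - z0)"
    and ?\<delta> = "central_proj z0 u p - central_proj z0 u q"
  have cross: "cross (p - z0) (q - z0) = ?yp * ?yq * ?\<delta>"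
    using assms(1,3,5) by (intro cross_eq_central_proj_diff) auto
  have "0 \<le> ?yp * ?yq * ?\<delta>"
    using chord assms(2) cross by (metis order.trans zero_le_dist mult_nonneg_nonneg)
  moreover have "0 < ?yp * ?yq"
    using assms(3,5) by simp
  ultimately have "0 \<le> ?\<delta>"
    by (metis mult_pos_neg not_le)
  moreover have "?yp * ?yq \<le> D\<^sup>2"
    using assms(3-6) by (simp add: power2_eq_square mult_mono)
  ultimately have "?yp * ?yq * ?\<delta> \<le> D\<^sup>2 * ?\<delta>"
    by (rule mult_right_mono[rotated])
  then show ?thesis
    using chord cross by linarith
qed

lemma central_proj_diff_le:
  assumes "cmod u = 1" "cross u (a - z0) = T" "cross u (b - z0) = T" "0 < T"
  shows "\<bar>central_proj z0 u a - central_proj z0 u b\<bar> \<le> dist a b / T"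
proof -
  have "central_proj z0 u a - central_proj z0 u b = (u \<bullet> (a - b)) / T"
    using assms(2,3) by (simp add: central_proj_def inner_diff_right diff_divide_distrib)
  moreover have "\<bar>u \<bullet> (a - b)\<bar> \<le> dist a b"
    using Cauchy_Schwarz_ineq2[of u "a - b"] assms(1) by (simp add: dist_norm)
  ultimately show ?thesis
    using assms(4) by (simp add: divide_right_mono)
qed

lemma bdd_above_inscribed_radii:
  fixes S :: "'a::euclidean_space set"
  assumes "bounded S"
  shows "bdd_above {r. \<exists>y. cball y r \<subseteq> S}"
proof -
  obtain x R where R: "S \<subseteq> cball x R"
    using assms bounded_subset_cball by blast
  show ?thesis
  proof (rule bdd_aboveI)
    fix r
    assume "r \<in> {r. \<exists>y. cball y r \<subseteq> S}"
    then obtain y where "cball y r \<subseteq> cball x R"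
      using R by blast
    then show "r \<le> max 0 R"
      using cball_subset_cball_iff[of y r x R] zero_le_dist[of y x] by linarith
  qed
qed

lemma inscribed_disc_radius_gt:
  fixes S :: "complex set"
  assumes "bounded S" "cball z0 r0 \<subseteq> S" "t < inradius S"
  obtains z r where "cball z r \<subseteq> S" "t < r"
  using less_cSup_iff[OF _ bdd_above_inscribed_radii[OF assms(1)], of t] assms(2,3)
  unfolding inradius_def by blast

lemma inradius_pos:
  fixes S :: "complex set"
  assumes "bounded S" "0 < r0" "cball z0 r0 \<subseteq> S"
  shows "0 < inradius S"
  using cSup_upper[OF _ bdd_above_inscribed_radii[OF assms(1)], of r0] assms(2,3)
  unfolding inradius_def by force

lemma enclosing_disc_radius_lt:
  fixes S :: "complex set"
  assumes "bounded S" "z0 \<in> S" "circumradius S < t"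
  obtains x R where "S \<subseteq> cball x R" "R < t"
proof -
  let ?enclosing = "{R. \<exists>x. S \<subseteq> cball x R}"
  have "?enclosing \<noteq> {}"
    using assms(1) bounded_subset_cball by blast
  moreover have "bdd_below ?enclosing"
  proof (rule bdd_belowI)
    fix R
    assume "R \<in> ?enclosing"
    then obtain x where "S \<subseteq> cball x R"
      by blast
    then have "dist x z0 \<le> R"
      using assms(2) by auto
    then show "0 \<le> R"
      using zero_le_dist[of x z0] by linarith
  qed
  ultimately show ?thesis
    using cInf_less_iff[of ?enclosing t] assms(3) that unfolding circumradius_def by blast
qed

lemma fat_discs:
  fixes S :: "complex set"
  assumes "fat c S" "0 \<le> c" "bounded S" "0 < r0" "cball z0 r0 \<subseteq> S"
  obtains z r x R where "0 < r" "cball z r \<subseteq> S" "S \<subseteq> cball x R" "R \<le> 2 * (c + 1) * r"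
proof -
  have ri: "0 < inradius S"
    using assms(3-5) by (rule inradius_pos)
  have "inradius S / 2 < inradius S"
    using ri by simp
  then obtain z r where r: "cball z r \<subseteq> S" "inradius S / 2 < r"
    by (rule inscribed_disc_radius_gt[OF assms(3,5)])
  have "z0 \<in> S" "circumradius S < circumradius S + inradius S"
    using ri assms(4,5) by auto
  then obtain x R where R: "S \<subseteq> cball x R" "R < circumradius S + inradius S"
    by (rule enclosing_disc_radius_lt[OF assms(3)])
  have "circumradius S \<le> c * inradius S"
    using assms(1) ri unfolding fat_def by (simp add: divide_le_eq)
  then have "R \<le> (c + 1) * inradius S"
    using R(2) by (simp add: algebra_simps)
  also have "\<dots> \<le> (c + 1) * (2 * r)"
    using r(2) assms(2) by (intro mult_left_mono) auto
  finally have "R \<le> 2 * (c + 1) * r"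
    by (simp add: algebra_simps)
  moreover have "0 < r"
    using r(2) ri by linarith
  ultimately show ?thesis
    using r(1) R(1) that by blast
qed

locale ccw_polygon =
  fixes n :: nat and v :: "nat \<Rightarrow> complex"
  assumes convex_polygon: "convex_polygon n v"
begin

abbreviation "len \<equiv> edge_len n v"
abbreviation "cum \<equiv> cum_len n v"
abbreviation "perim \<equiv> perimeter n v"
abbreviation "region \<equiv> polygon_region n v"

definition edge :: "nat \<Rightarrow> complex" where
  "edge k = v (Suc k mod n) - v k"

definition side :: "nat \<Rightarrow> complex \<Rightarrow> real" where
  "side k z = cross (edge k) (z - v k)"

lemma n_ge_3: "3 \<le> n"
  using convex_polygon unfolding convex_polygon_def by simp

lemma side_vertex_pos:
  "k < n \<Longrightarrow> j < n \<Longrightarrow> j \<noteq> k \<Longrightarrow> j \<noteq> Suc k mod n \<Longrightarrow> 0 < side k (v j)"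
  using convex_polygon unfolding convex_polygon_def side_def edge_def by blast

lemma edge_nonzero:
  assumes "k < n"
  shows "edge k \<noteq> 0"
proof
  assume "edge k = 0"
  have "(k + 2) mod n \<noteq> k"
    using add_mod_neq[OF assms, of 2] n_ge_3 by simp
  moreover have "(k + 2) mod n \<noteq> Suc k mod n"
    using add_mod_neq[where k = "Suc k mod n" and m = 1 and n = n] n_ge_3 by (simp add: mod_Suc_eq)
  ultimately have "0 < side k (v ((k + 2) mod n))"
    using assms n_ge_3 by (intro side_vertex_pos) auto
  then show False
    using \<open>edge k = 0\<close> by (simp add: side_def cross_def)
qed

lemma len_eq_norm_edge: "len k = cmod (edge k)"
  by (simp add: edge_len_def edge_def dist_norm norm_minus_commute)

lemma len_pos: "k < n \<Longrightarrow> 0 < len k"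
  using edge_nonzero len_eq_norm_edge by simp

lemma cum_Suc: "cum (Suc k) = cum k + len k"
  by (simp add: cum_len_def)

lemma cum_mono: "j \<le> k \<Longrightarrow> k \<le> n \<Longrightarrow> cum j \<le> cum k"
  unfolding cum_len_def using len_pos
  by (intro sum_mono2) (auto simp: less_imp_le)

lemma cum_nonneg: "0 \<le> cum k"
  unfolding cum_len_def edge_len_def by (simp add: sum_nonneg)

lemma cum_less_perim: "j < n \<Longrightarrow> cum j < perim"
  using cum_mono[of "Suc j" n] cum_Suc[of j] len_pos[of j] by (simp add: perimeter_def)

lemma sum_edge: "i \<le> n \<Longrightarrow> (\<Sum>k<i. edge k) = v (i mod n) - v 0"
  by (induction i) (auto simp: edge_def)

definition edge_param :: "nat \<Rightarrow> real \<Rightarrow> real" where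
  "edge_param k s = max 0 (min 1 ((s - cum k) / len k))"

lemma edge_param_before: "k < n \<Longrightarrow> s \<le> cum k \<Longrightarrow> edge_param k s = 0"
  using len_pos[of k] by (simp add: edge_param_def divide_nonpos_pos)

lemma edge_param_after: "k < n \<Longrightarrow> cum (Suc k) \<le> s \<Longrightarrow> edge_param k s = 1"
  using len_pos[of k] by (simp add: edge_param_def cum_Suc field_simps)

text \<open>One counterclockwise lap of the boundary from v 0, by arc length; constant outside
  [0, perim].\<close>
definition boundary :: "real \<Rightarrow> complex" where
  "boundary s = v 0 + (\<Sum>k<n. of_real (edge_param k s) * edge k)"

lemma boundary_on_edge:
  assumes k: "k < n" and s: "cum k \<le> s" "s \<le> cum (Suc k)"
  shows "boundary s = v k + of_real ((s - cum k) / len k) * edge k"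
proof -
  have "of_real (edge_param j s) * edge j =
      (if j < k then edge j else 0) + (if j = k then of_real ((s - cum k) / len k) * edge k else 0)"
    if "j < n" for j
  proof -
    consider "j < k" | "j = k" | "k < j"
      by linarith
    then show ?thesis
    proof cases
      case 1
      then show ?thesis
        using cum_mono[of "Suc j" k] k s that by (simp add: edge_param_after)
    next
      case 2
      then show ?thesis
        using s len_pos[OF k] by (simp add: edge_param_def cum_Suc field_simps)
    next
      case 3
      then show ?thesis
        using cum_mono[of "Suc k" j] that s by (simp add: edge_param_before)
    qed
  qed
  then have "(\<Sum>j<n. of_real (edge_param j s) * edge j) =
      (\<Sum>j<n. if j < k then edge j else 0) + of_real ((s - cum k) / len k) * edge k"
    using k by (simp add: sum.distrib)
  also have "(\<Sum>j<n. if j < k then edge j else 0) = (\<Sum>j<k. edge j)"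
    using k by (intro sum.mono_neutral_cong_right) auto
  finally show ?thesis
    using sum_edge[of k] k by (simp add: boundary_def)
qed

lemma boundary_nonpos: "s \<le> 0 \<Longrightarrow> boundary s = v 0"
proof -
  assume "s \<le> 0"
  then have "edge_param k s = 0" if "k < n" for k
    using that cum_nonneg[of k] by (intro edge_param_before) auto
  then show ?thesis
    by (simp add: boundary_def)
qed

lemma boundary_beyond_perim: "perim \<le> s \<Longrightarrow> boundary s = v 0"
proof -
  assume "perim \<le> s"
  then have "edge_param k s = 1" if "k < n" for k
    using that cum_mono[of "Suc k" n] by (intro edge_param_after) (auto simp: perimeter_def)
  then show ?thesis
    using sum_edge[of n] by (simp add: boundary_def)
qed

lemma continuous_boundary: "continuous_on A boundary"
  unfolding boundary_def edge_param_def
  using len_pos by (intro continuous_intros) (auto simp: less_imp_neq[symmetric])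

lemma boundary_vertex: "j < n \<Longrightarrow> boundary (cum j) = v j"
  using boundary_on_edge[of j "cum j"] len_pos[of j] by (simp add: cum_Suc)

lemma at_arclen_boundary:
  assumes "at_arclen n v s p"
  shows "p = boundary s" "0 \<le> s" "s < perim"
  using assms boundary_on_edge unfolding at_arclen_def edge_def by auto

lemma convex_region: "convex region"
  by (simp add: polygon_region_def)

lemma compact_region: "compact region"
  by (simp add: polygon_region_def compact_convex_hull finite_imp_compact)

lemma vertex_in_region: "j < n \<Longrightarrow> v j \<in> region"
  by (simp add: polygon_region_def hull_inc)

lemma edge_point_in_region:
  assumes "k < n" "0 \<le> t" "t \<le> 1"
  shows "v k + of_real t * edge k \<in> region"
proof -
  have "(1 - t) *\<^sub>R v k + t *\<^sub>R v (Suc k mod n) \<in> region"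
    using assms by (intro convexD_alt convex_region vertex_in_region) auto
  then show ?thesis
    by (simp add: edge_def scaleR_conv_of_real algebra_simps)
qed

lemma side_edge_point [simp]: "side k (v k + of_real t * edge k) = 0"
  by (simp add: side_def cross_scale_right)

lemma side_edge_point_combination:
  "side k (v j + of_real t * edge j) = (1 - t) * side k (v j) + t * side k (v (Suc j mod n))"
  by (simp add: side_def edge_def cross_def algebra_simps)

lemma side_vertex_nonneg: "k < n \<Longrightarrow> j < n \<Longrightarrow> 0 \<le> side k (v j)"
  using side_vertex_pos[of k j]
  by (cases "j = k \<or> j = Suc k mod n") (auto simp: side_def edge_def cross_def algebra_simps)

lemma region_subset_side: "k < n \<Longrightarrow> region \<subseteq> {z. 0 \<le> side k z}"
  unfolding polygon_region_def side_def
  using side_vertex_nonneg by (intro hull_minimal convex_cross_halfplane) (auto simp: side_def)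

lemma edge_point_in_frontier:
  assumes "k < n" "0 \<le> t" "t \<le> 1"
  shows "v k + of_real t * edge k \<in> frontier region"
proof -
  have "v k + of_real t * edge k \<notin> interior region"
    using edge_nonzero[OF assms(1)] region_subset_side[OF assms(1)] side_edge_point[of k t]
    unfolding side_def by (rule cross_zero_notin_interior)
  then show ?thesis
    using edge_point_in_region[OF assms] compact_region
    by (simp add: frontier_def compact_imp_closed)
qed

lemma side_zero_on_edge:
  assumes "k < n" "k' < n" "0 \<le> t" "t < 1" "side k (v k' + of_real t * edge k') = 0"
  shows "k' = k \<or> k' = Suc k mod n"
proof (rule ccontr)
  assume "\<not> ?thesis"
  then have "0 < (1 - t) * side k (v k')"
    using assms(1-4) side_vertex_pos by simp
  moreover have "0 \<le> t * side k (v (Suc k' mod n))"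
    using assms(1-3) side_vertex_nonneg by simp
  ultimately show False
    using assms(5) side_edge_point_combination[of k k' t] by linarith
qed

lemma edge_points_eq:
  assumes "k < n" "k' < n" "0 \<le> t" "t < 1" "0 \<le> t'" "t' < 1"
    and eq: "v k + of_real t * edge k = v k' + of_real t' * edge k'"
  shows "k = k' \<and> t = t'"
proof -
  have "k = k'"
  proof (rule ccontr)
    assume "k \<noteq> k'"
    moreover have "k' = k \<or> k' = Suc k mod n"
      using side_edge_point[of k t] eq by (intro side_zero_on_edge[OF assms(1,2,5,6)]) simp
    moreover have "k = k' \<or> k = Suc k' mod n"
      using side_edge_point[of k' t'] eq by (intro side_zero_on_edge[OF assms(2,1,3,4)]) simp
    ultimately have "k' = Suc k mod n" "k = Suc k' mod n"
      by auto
    then have "(k + 2) mod n = k"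
      by (metis add_2_eq_Suc' mod_Suc_eq)
    then show False
      using add_mod_neq[OF assms(1), of 2] n_ge_3 by simp
  qed
  then show ?thesis
    using eq edge_nonzero[OF assms(1)] by simp
qed

lemma boundary_half_open_edge:
  assumes "0 \<le> s" "s < perim"
  obtains k t where "k < n" "0 \<le> t" "t < 1" "s = cum k + t * len k"
    "boundary s = v k + of_real t * edge k"
proof -
  define k where "k = Max {j. j \<le> n \<and> cum j \<le> s}"
  have fin: "finite {j. j \<le> n \<and> cum j \<le> s}"
    by simp
  have "0 \<in> {j. j \<le> n \<and> cum j \<le> s}"
    using assms(1) by (simp add: cum_len_def)
  then have "k \<in> {j. j \<le> n \<and> cum j \<le> s}"
    unfolding k_def using Max_in[OF fin] by blast
  then have "cum k \<le> s" "k \<le> n"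
    by auto
  moreover have "k \<noteq> n"
    using \<open>cum k \<le> s\<close> assms(2) by (auto simp: perimeter_def)
  moreover have "s < cum (Suc k)"
    using Max_ge[OF fin, of "Suc k"] \<open>k \<le> n\<close> \<open>k \<noteq> n\<close> unfolding k_def[symmetric] by fastforce
  ultimately have k: "k < n" "cum k \<le> s" "s < cum (Suc k)"
    by auto
  define t where "t = (s - cum k) / len k"
  show ?thesis
  proof (rule that)
    show "k < n" "0 \<le> t" "t < 1" "s = cum k + t * len k"
      using k len_pos[OF k(1)] by (auto simp: t_def cum_Suc field_simps)
    show "boundary s = v k + of_real t * edge k"
      using boundary_on_edge k unfolding t_def by simp
  qed
qed

lemma boundary_in_frontier: "0 \<le> s \<Longrightarrow> s < perim \<Longrightarrow> boundary s \<in> frontier region"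
  by (metis boundary_half_open_edge edge_point_in_frontier less_imp_le)

lemma inj_on_boundary: "inj_on boundary {0..<perim}"
proof (rule inj_onI)
  fix s s'
  assume "s \<in> {0..<perim}" "s' \<in> {0..<perim}" "boundary s = boundary s'"
  then obtain k t k' t' where
    "k < n" "0 \<le> t" "t < 1" "s = cum k + t * len k" "boundary s = v k + of_real t * edge k"
    "k' < n" "0 \<le> t'" "t' < 1" "s' = cum k' + t' * len k'" "boundary s' = v k' + of_real t' * edge k'"
    by (metis atLeastLessThan_iff boundary_half_open_edge)
  then show "s = s'"
    using edge_points_eq[of k k' t t'] \<open>boundary s = boundary s'\<close> by auto
qed

lemma side_shift: "side k (z - of_real t * (\<i> * edge k)) = side k z - t * (cmod (edge k))\<^sup>2"
  by (simp add: side_def cross_diff_right cross_scale_right cross_i_mult_right)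

lemma disc_below_side:
  assumes "k < n" "0 \<le> r" "cball z r \<subseteq> region"
  shows "r * cmod (edge k) \<le> side k z"
proof -
  define t where "t = r / cmod (edge k)"
  have e: "0 < cmod (edge k)"
    using edge_nonzero[OF assms(1)] by simp
  have "dist z (z - of_real t * (\<i> * edge k)) = r"
    using e assms(2) by (simp add: t_def dist_norm norm_mult norm_divide)
  then have "0 \<le> side k (z - of_real t * (\<i> * edge k))"
    using assms(3) region_subset_side[OF assms(1)] by (auto simp: subset_iff)
  moreover have "side k (z - of_real t * (\<i> * edge k)) = side k z - r * cmod (edge k)"
    using e by (simp only: side_shift) (simp add: t_def power2_eq_square)
  ultimately show ?thesis
    by simp
qed

lemma region_contains_disc: "\<exists>z r. 0 < r \<and> cball z r \<subseteq> region"
proof -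
  have "\<not> collinear {v 0, v 1, v 2}"
  proof
    assume "collinear {v 0, v 1, v 2}"
    then obtain w c1 c2 where "v 1 - v 0 = c1 *\<^sub>R w" "v 2 - v 0 = c2 *\<^sub>R w"
      unfolding collinear_def by (metis insertI1 insertI2)
    then have "side 0 (v 2) = 0"
      using n_ge_3 by (simp add: side_def edge_def scaleR_conv_of_real cross_def algebra_simps)
    then show False
      using side_vertex_pos[of 0 2] n_ge_3 by simp
  qed
  then have "(1/3) *\<^sub>R v 0 + (1/3) *\<^sub>R v 1 + (1/3) *\<^sub>R v 2 \<in> interior (convex hull {v 0, v 1, v 2})"
    by (subst interior_convex_hull_3_minimal) (auto intro!: exI[where x = "1/3"])
  also have "\<dots> \<subseteq> interior region"
    unfolding polygon_region_def using n_ge_3 by (intro interior_mono hull_mono) auto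
  finally show ?thesis
    by (meson mem_interior_cball)
qed

lemma boundary_in_region: "boundary s \<in> region"
proof (cases "0 \<le> s \<and> s < perim")
  case True
  then have "boundary s \<in> frontier region"
    by (simp add: boundary_in_frontier)
  then show ?thesis
    using frontier_subset_closed[OF compact_imp_closed[OF compact_region]] by blast
next
  case False
  then have "boundary s = v 0"
    using boundary_nonpos[of s] boundary_beyond_perim[of s] by linarith
  then show ?thesis
    using vertex_in_region[of 0] n_ge_3 by simp
qed

lemma region_subset_if_boundary:
  assumes "convex H" "\<And>s. 0 \<le> s \<Longrightarrow> s < perim \<Longrightarrow> boundary s \<in> H"
  shows "region \<subseteq> H"
  unfolding polygon_region_def
proof (intro hull_minimal assms(1) image_subsetI)
  fix j
  assume "j \<in> {..<n}"
  then show "v j \<in> H"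
    using assms(2)[OF cum_nonneg cum_less_perim] boundary_vertex by simp
qed

lemma cross_on_edge:
  "cross (v k + of_real t' * edge k - z) (v k + of_real t * edge k - z) = (t - t') * side k z"
  by (simp add: side_def cross_def algebra_simps)

lemma edge_arc_estimate:
  assumes k: "k < n" "cum k \<le> s'" "s' \<le> s" "s \<le> cum (Suc k)"
    and "cmod u = 1" "0 \<le> r" "cball z r \<subseteq> region"
    and "0 < cross u (boundary s' - z)" "cross u (boundary s' - z) \<le> D"
    and "0 < cross u (boundary s - z)" "cross u (boundary s - z) \<le> D"
  shows "r * (s - s') \<le> D\<^sup>2 * (central_proj z u (boundary s') - central_proj z u (boundary s))"
proof -
  define t' where "t' = (s' - cum k) / len k"
  define t where "t = (s - cum k) / len k"
  have len_k: "0 < len k" "len k = cmod (edge k)"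
    using len_pos[OF k(1)] len_eq_norm_edge by auto
  have p: "boundary s' = v k + of_real t' * edge k" and q: "boundary s = v k + of_real t * edge k"
    using boundary_on_edge k unfolding t'_def t_def by auto
  have diff: "s - s' = (t - t') * cmod (edge k)" and "0 \<le> t - t'"
    using len_k k(3) by (auto simp: t_def t'_def field_simps divide_right_mono)
  have "boundary s' - boundary s = of_real (t' - t) * edge k"
    unfolding p q by (simp add: algebra_simps)
  then have dist: "dist (boundary s') (boundary s) = s - s'"
    using diff \<open>0 \<le> t - t'\<close> by (simp add: dist_norm norm_mult del: of_real_diff)
  have "r * dist (boundary s') (boundary s) = (t - t') * (r * cmod (edge k))"
    using dist diff by simp
  also have "\<dots> \<le> (t - t') * side k z"
    using disc_below_side[OF k(1) assms(6,7)] \<open>0 \<le> t - t'\<close> by (rule mult_left_mono)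
  also have "\<dots> = cross (boundary s' - z) (boundary s - z)"
    unfolding p q cross_on_edge ..
  finally show ?thesis
    using chord_le_central_proj_diff[OF assms(5,6,8-11)] dist by simp
qed

lemma arc_estimate:
  assumes "0 \<le> l" "l \<le> l'" "l' \<le> perim"
    and "cmod u = 1" "0 \<le> r" "cball z r \<subseteq> region"
    and height: "\<And>s. l \<le> s \<Longrightarrow> s \<le> l' \<Longrightarrow> 0 < cross u (boundary s - z) \<and> cross u (boundary s - z) \<le> D"
  shows "r * (l' - l) \<le> D\<^sup>2 * (central_proj z u (boundary l) - central_proj z u (boundary l'))"
proof -
  define G where "G s = r * s + D\<^sup>2 * central_proj z u (boundary s)" for s
  have mono: "antimono_on ({cum 0..cum n} \<inter> {l..l'}) G"
  proof (rule antimono_on_partition)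
    fix k
    assume "k < n"
    show "antimono_on ({cum k..cum (Suc k)} \<inter> {l..l'}) G"
    proof (rule monotone_onI)
      fix s' s
      assume "s' \<in> {cum k..cum (Suc k)} \<inter> {l..l'}" "s \<in> {cum k..cum (Suc k)} \<inter> {l..l'}" "s' \<le> s"
      then have "r * (s - s') \<le> D\<^sup>2 * (central_proj z u (boundary s') - central_proj z u (boundary s))"
        using height[of s] height[of s'] \<open>k < n\<close> by (intro edge_arc_estimate assms(4-6)) auto
      then show "G s \<le> G s'"
        by (simp add: G_def algebra_simps)
    qed
  qed
  have "G l' \<le> G l"
    by (rule monotone_onD[OF mono]) (use assms(1-3) in \<open>auto simp: cum_len_def perimeter_def\<close>)
  then show ?thesis
    by (simp add: G_def algebra_simps)
qed

lemma arc_estimate_far_side: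
  assumes "0 \<le> l" "l \<le> l'" "l' \<le> perim"
    and "cmod u = 1" "0 \<le> r" "cball z r \<subseteq> region"
    and far: "0 < cross u (q - z)" and diam: "\<And>p. p \<in> region \<Longrightarrow> cmod (p - z) \<le> D"
    and arc: "\<forall>s\<in>{l..l'}. 0 \<le> cross u (boundary s - q)"
  shows "r * (l' - l) \<le> D\<^sup>2 * (central_proj z u (boundary l) - central_proj z u (boundary l'))"
proof (rule arc_estimate[OF assms(1-6)])
  fix s
  assume "l \<le> s" "s \<le> l'"
  have "cross u (boundary s - z) = cross u (boundary s - q) + cross u (q - z)"
    using cross_add_right[of u "boundary s - q" "q - z"] by simp
  moreover have "cross u (boundary s - z) \<le> cmod (boundary s - z)"
    using abs_cross_le[of u "boundary s - z"] assms(4) by simp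
  moreover have "0 \<le> cross u (boundary s - q)"
    using arc \<open>l \<le> s\<close> \<open>s \<le> l'\<close> by simp
  ultimately show "0 < cross u (boundary s - z) \<and> cross u (boundary s - z) \<le> D"
    using far diam[OF boundary_in_region[of s]] by linarith
qed

text \<open>Two laps of the boundary, so that the arc from sb around to sa + perim is contiguous.\<close>
definition boundary2 :: "real \<Rightarrow> complex" where
  "boundary2 s = boundary s + boundary (s - perim) - v 0"

lemma boundary2_first_lap: "s \<le> perim \<Longrightarrow> boundary2 s = boundary s"
  by (simp add: boundary2_def boundary_nonpos)

lemma boundary2_second_lap: "perim \<le> s \<Longrightarrow> boundary2 s = boundary (s - perim)"
  by (simp add: boundary2_def boundary_beyond_perim)

lemma continuous_boundary2: "continuous_on A boundary2"
  unfolding boundary2_def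
  by (intro continuous_intros continuous_on_compose2[OF continuous_boundary[of UNIV]]) auto

end

locale polygon_chord = ccw_polygon +
  fixes M :: "complex set" and a b :: complex and sa sb :: real
  assumes line: "is_line M"
    and meets_frontier: "M \<inter> frontier (polygon_region n v) = {a, b}"
    and a_ne_b: "a \<noteq> b"
    and a_eq: "a = boundary sa" and b_eq: "b = boundary sb"
    and arclen_order: "0 \<le> sa" "sa < sb" "sb < perimeter n v"
begin

lemma boundary_off_line:
  assumes "0 \<le> t" "t < perim" "t \<noteq> sa" "t \<noteq> sb"
  shows "boundary t \<notin> M"
proof
  assume "boundary t \<in> M"
  moreover have "boundary t \<in> frontier region"
    using assms(1,2) by (rule boundary_in_frontier)
  ultimately have "boundary t = boundary sa \<or> boundary t = boundary sb"
    using meets_frontier a_eq b_eq by blast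
  moreover have "boundary t \<noteq> boundary sa" "boundary t \<noteq> boundary sb"
    using inj_onD[OF inj_on_boundary, of t sa] inj_onD[OF inj_on_boundary, of t sb] assms arclen_order
    by auto
  ultimately show False
    by blast
qed

lemma arc_signs:
  assumes "u \<noteq> 0" "cross u (b - a) = 0"
  defines "F \<equiv> \<lambda>s. cross u (boundary2 s - a)"
  shows "(\<forall>s\<in>{sa..sb}. 0 \<le> F s) \<or> (\<forall>s\<in>{sa..sb}. F s \<le> 0)"
    and "(\<forall>s\<in>{sb..sa + perim}. 0 \<le> F s) \<or> (\<forall>s\<in>{sb..sa + perim}. F s \<le> 0)"
proof -
  have "a \<in> M" "b \<in> M"
    using meets_frontier by auto
  have off: "F s \<noteq> 0" if "boundary2 s = boundary t" "0 \<le> t" "t < perim" "t \<noteq> sa" "t \<noteq> sb" for s t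
  proof
    assume "F s = 0"
    then have "cross u (boundary t - a) = 0"
      using that(1) by (simp add: F_def)
    then have "boundary t \<in> M"
      by (rule line_contains_parallel[OF line \<open>a \<in> M\<close> \<open>b \<in> M\<close> a_ne_b assms(1,2)])
    then show False
      using boundary_off_line[OF that(2-5)] by blast
  qed
  have cont: "continuous_on A F" for A
    unfolding F_def cross_conv_inner by (intro continuous_intros continuous_boundary2)
  have F_a: "F sa = 0" "F (sa + perim) = 0" and F_b: "F sb = 0"
    using arclen_order assms(2) a_eq b_eq by (simp_all add: F_def boundary2_first_lap boundary2_second_lap)
  show "(\<forall>s\<in>{sa..sb}. 0 \<le> F s) \<or> (\<forall>s\<in>{sa..sb}. F s \<le> 0)"
  proof (intro continuous_on_sign_between_zeros cont F_a F_b)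
    fix s
    assume "sa < s" "s < sb"
    then show "F s \<noteq> 0"
      using arclen_order by (intro off[OF boundary2_first_lap]) auto
  qed
  show "(\<forall>s\<in>{sb..sa + perim}. 0 \<le> F s) \<or> (\<forall>s\<in>{sb..sa + perim}. F s \<le> 0)"
  proof (intro continuous_on_sign_between_zeros cont F_a F_b)
    fix s
    assume "sb < s" "s < sa + perim"
    show "F s \<noteq> 0"
    proof (cases "s < perim")
      case True
      then show ?thesis
        using \<open>sb < s\<close> arclen_order by (intro off[OF boundary2_first_lap]) auto
    next
      case False
      then show ?thesis
        using \<open>s < sa + perim\<close> arclen_order by (intro off[OF boundary2_second_lap]) auto
    qed
  qed
qed

lemma arcs_via_boundary2:
  shows "(\<forall>s\<in>{sa..sb}. P (boundary2 s)) \<longleftrightarrow> (\<forall>s\<in>{sa..sb}. P (boundary s))"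
    and "(\<forall>s\<in>{sb..sa + perim}. P (boundary2 s)) \<longleftrightarrow> (\<forall>s\<in>{0..sa} \<union> {sb..perim}. P (boundary s))"
proof -
  show "(\<forall>s\<in>{sa..sb}. P (boundary2 s)) \<longleftrightarrow> (\<forall>s\<in>{sa..sb}. P (boundary s))"
    using arclen_order by (auto simp: boundary2_first_lap)
  show "(\<forall>s\<in>{sb..sa + perim}. P (boundary2 s)) \<longleftrightarrow> (\<forall>s\<in>{0..sa} \<union> {sb..perim}. P (boundary s))"
  proof (intro iffI ballI)
    fix s
    assume A: "\<forall>s\<in>{sb..sa + perim}. P (boundary2 s)" and s: "s \<in> {0..sa} \<union> {sb..perim}"
    show "P (boundary s)"
    proof (cases "s \<le> sa")
      case True
      then show ?thesis
        using bspec[OF A, of "s + perim"] s arclen_order by (simp add: boundary2_second_lap)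
    next
      case False
      then show ?thesis
        using bspec[OF A, of s] s arclen_order by (simp add: boundary2_first_lap)
    qed
  next
    fix s
    assume B: "\<forall>s\<in>{0..sa} \<union> {sb..perim}. P (boundary s)" and s: "s \<in> {sb..sa + perim}"
    show "P (boundary2 s)"
    proof (cases "s \<le> perim")
      case True
      then show ?thesis
        using bspec[OF B, of s] s by (simp add: boundary2_first_lap)
    next
      case False
      then show ?thesis
        using bspec[OF B, of "s - perim"] s arclen_order by (simp add: boundary2_second_lap)
    qed
  qed
qed

lemma arcs_not_both_nonpos:
  assumes "u \<noteq> 0" "cross u (b - a) = 0"
  shows "\<not> ((\<forall>s\<in>{sa..sb}. cross u (boundary s - a) \<le> 0) \<and>
    (\<forall>s\<in>{0..sa} \<union> {sb..perim}. cross u (boundary s - a) \<le> 0))"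
proof
  assume "(\<forall>s\<in>{sa..sb}. cross u (boundary s - a) \<le> 0) \<and>
    (\<forall>s\<in>{0..sa} \<union> {sb..perim}. cross u (boundary s - a) \<le> 0)"
  then have "cross u (boundary s - a) \<le> 0" if "0 \<le> s" "s < perim" for s
    using that by (cases "sa \<le> s \<and> s \<le> sb") auto
  then have "region \<subseteq> {z. 0 \<le> cross (- u) (z - a)}"
    by (intro region_subset_if_boundary convex_cross_halfplane) (simp add: cross_minus_left)
  moreover have "\<not> region \<subseteq> {z. 0 \<le> cross (- u) (z - a)}"
    using convex_region compact_imp_closed[OF compact_region] line meets_frontier a_ne_b assms
    by (intro secant_not_supporting) (auto simp: cross_minus_left)
  ultimately show False
    by blast
qed

lemma one_arc_nonneg_side:
  assumes "u \<noteq> 0" "cross u (b - a) = 0"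
  shows "(\<forall>s\<in>{sa..sb}. 0 \<le> cross u (boundary s - a)) \<or>
    (\<forall>s\<in>{0..sa} \<union> {sb..perim}. 0 \<le> cross u (boundary s - a))"
  using arc_signs[OF assms] arcs_not_both_nonpos[OF assms]
  unfolding arcs_via_boundary2[where P = "\<lambda>z. 0 \<le> cross u (z - a)"]
    arcs_via_boundary2[where P = "\<lambda>z. cross u (z - a) \<le> 0"]
  by blast

lemma shorter_arc_le_central_proj_diff:
  assumes u: "cmod u = 1" "cross u (b - a) = 0"
    and disc: "0 < r" "cball z r \<subseteq> region" and far: "r \<le> cross u (a - z)"
    and diam: "\<And>p. p \<in> region \<Longrightarrow> cmod (p - z) \<le> D"
  shows "r * min (sb - sa) (perim - (sb - sa)) \<le> D\<^sup>2 * \<bar>central_proj z u a - central_proj z u b\<bar>"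
proof -
  let ?h = "central_proj z u"
  have arc: "r * (l' - l) \<le> D\<^sup>2 * (?h (boundary l) - ?h (boundary l'))"
    if "0 \<le> l" "l \<le> l'" "l' \<le> perim" "\<forall>s\<in>{l..l'}. 0 \<le> cross u (boundary s - a)" for l l'
    using disc far diam that by (intro arc_estimate_far_side[OF that(1-3) u(1)]) auto
  have abs_bound: "D\<^sup>2 * (?h a - ?h b) \<le> D\<^sup>2 * \<bar>?h a - ?h b\<bar>"
    "D\<^sup>2 * (?h b - ?h a) \<le> D\<^sup>2 * \<bar>?h a - ?h b\<bar>"
    by (intro mult_left_mono; simp)+
  have min_bound: "r * min (sb - sa) (perim - (sb - sa)) \<le> r * (sb - sa)"
    "r * min (sb - sa) (perim - (sb - sa)) \<le> r * (perim - (sb - sa))"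
    using disc(1) by (intro mult_left_mono; simp)+
  consider "\<forall>s\<in>{sa..sb}. 0 \<le> cross u (boundary s - a)"
    | "\<forall>s\<in>{0..sa} \<union> {sb..perim}. 0 \<le> cross u (boundary s - a)"
    using one_arc_nonneg_side[OF _ u(2)] u(1) by fastforce
  then show ?thesis
  proof cases
    case 1
    then have "r * (sb - sa) \<le> D\<^sup>2 * (?h a - ?h b)"
      using arc[of sa sb] a_eq b_eq arclen_order by simp
    then show ?thesis
      using min_bound(1) abs_bound(1) by linarith
  next
    case 2
    then have "r * (perim - sb) \<le> D\<^sup>2 * (?h b - ?h (boundary perim))"
      and "r * (sa - 0) \<le> D\<^sup>2 * (?h (boundary 0) - ?h a)"
      using arc[of sb perim] arc[of 0 sa] a_eq b_eq arclen_order by auto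
    moreover have "boundary perim = boundary 0"
      by (simp add: boundary_nonpos boundary_beyond_perim)
    ultimately have "r * (perim - (sb - sa)) \<le> D\<^sup>2 * (?h b - ?h a)"
      by (simp add: algebra_simps)
    then show ?thesis
      using min_bound(2) abs_bound(2) by linarith
  qed
qed

lemma shorter_arc_le_in_frame:
  assumes u: "cmod u = 1" "cross u (b - a) = 0"
    and disc: "0 < r" "cball z r \<subseteq> region" and far: "r \<le> cross u (a - z)"
    and diam: "\<And>p. p \<in> region \<Longrightarrow> cmod (p - z) \<le> D"
  shows "r * min (sb - sa) (perim - (sb - sa)) \<le> D\<^sup>2 * dist a b / r"
proof -
  have "cross u (b - z) = cross u (a - z)"
    using cross_add_right[of u "b - a" "a - z"] u(2) by simp
  then have "\<bar>central_proj z u a - central_proj z u b\<bar> \<le> dist a b / cross u (a - z)"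
    using far disc(1) by (intro central_proj_diff_le[OF u(1)]) auto
  also have "\<dots> \<le> dist a b / r"
    using far disc(1) by (intro divide_left_mono) auto
  finally have "D\<^sup>2 * \<bar>central_proj z u a - central_proj z u b\<bar> \<le> D\<^sup>2 * (dist a b / r)"
    by (rule mult_left_mono) simp
  then show ?thesis
    using shorter_arc_le_central_proj_diff[OF assms] by simp
qed

lemma shorter_arc_le:
  assumes "0 < r" "cball z r \<subseteq> region" "region \<subseteq> cball x R"
  shows "min (sb - sa) (perim - (sb - sa)) \<le> 16 * R\<^sup>2 / r\<^sup>2 * dist a b"
proof -
  obtain u where u: "cmod u = 1" "cross u (b - a) = 0" "cross u (z - a) \<le> 0"
    using unit_parallel_with_sign[of "b - a" "z - a"] a_ne_b by auto
  define z' where "z' = z - of_real (r/2) * (\<i> * u)"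
  have "dist z z' = r/2"
    using u(1) assms(1) by (simp add: z'_def dist_norm norm_mult)
  then have "cball z' (r/2) \<subseteq> cball z r"
    by (simp add: cball_subset_cball_iff dist_commute)
  then have disc: "cball z' (r/2) \<subseteq> region"
    using assms(2) by blast
  have "a - z' = - (z - a) + of_real (r/2) * (\<i> * u)"
    by (simp add: z'_def)
  then have "cross u (a - z') = - cross u (z - a) + r/2 * cross u (\<i> * u)"
    by (simp only: cross_add_right cross_scale_right) (simp add: cross_def algebra_simps)
  then have far: "r/2 \<le> cross u (a - z')"
    using u(1,3) by (simp add: cross_i_mult_right)
  have "z' \<in> region"
    using disc assms(1) by auto
  have diam: "cmod (p - z') \<le> 2 * R" if "p \<in> region" for p
  proof -
    have "dist x p \<le> R" "dist x z' \<le> R"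
      using that \<open>z' \<in> region\<close> assms(3) by auto
    then have "dist p z' \<le> 2 * R"
      using dist_triangle[of p z' x] dist_commute[of x p] by linarith
    then show ?thesis
      by (simp add: dist_norm)
  qed
  have "r/2 * min (sb - sa) (perim - (sb - sa)) \<le> (2 * R)\<^sup>2 * dist a b / (r/2)"
    using assms(1) by (intro shorter_arc_le_in_frame[OF u(1,2) _ disc far diam]) auto
  also have "\<dots> = r/2 * (16 * R\<^sup>2 / r\<^sup>2 * dist a b)"
    using assms(1) by (simp add: field_simps power2_eq_square)
  finally show ?thesis
    by (rule mult_left_le_imp_le) (use assms(1) in simp)
qed

lemma shorter_arc_le_fat:
  assumes "fat c region" "0 \<le> c"
  shows "min (sb - sa) (perim - (sb - sa)) \<le> 64 * (c + 1)\<^sup>2 * dist a b"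
proof -
  obtain z0 r0 where disc0: "0 < r0" "cball z0 r0 \<subseteq> region"
    using region_contains_disc by blast
  obtain z r x R where zr: "0 < r" "cball z r \<subseteq> region" and xR: "region \<subseteq> cball x R"
    and R: "R \<le> 2 * (c + 1) * r"
    by (rule fat_discs[OF assms compact_imp_bounded[OF compact_region] disc0])
  have "z \<in> region"
    using zr by auto
  then have "dist x z \<le> R"
    using xR by auto
  then have "0 \<le> R"
    using zero_le_dist[of x z] by linarith
  then have "R\<^sup>2 \<le> (2 * (c + 1) * r)\<^sup>2"
    using R by (simp add: power_mono)
  then have "16 * R\<^sup>2 / r\<^sup>2 \<le> 16 * (2 * (c + 1) * r)\<^sup>2 / r\<^sup>2"
    by (simp add: divide_right_mono)
  also have "\<dots> = 64 * (c + 1)\<^sup>2"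
    using zr(1) by (simp only: power_mult_distrib) simp
  finally have "16 * R\<^sup>2 / r\<^sup>2 \<le> 64 * (c + 1)\<^sup>2" .
  then have "16 * R\<^sup>2 / r\<^sup>2 * dist a b \<le> 64 * (c + 1)\<^sup>2 * dist a b"
    by (rule mult_right_mono) simp
  with shorter_arc_le[OF zr xR] show ?thesis
    by linarith
qed

end

lemma shorter_arc_le_if_fat:
  assumes "convex_polygon n v" "fat c (polygon_region n v)" "0 \<le> c"
    and "is_line M" "a \<noteq> b" "M \<inter> frontier (polygon_region n v) = {a, b}"
    and "at_arclen n v sa a" "at_arclen n v sb b" "sa < sb"
  shows "min (sb - sa) (perimeter n v - (sb - sa)) \<le> 64 * (c + 1)\<^sup>2 * dist a b"
proof -
  interpret ccw_polygon n v
    using assms(1) by (rule ccw_polygon.intro)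
  interpret polygon_chord n v M a b sa sb
    using assms at_arclen_boundary[OF assms(7)] at_arclen_boundary[OF assms(8)]
    by (intro polygon_chord.intro polygon_chord_axioms.intro ccw_polygon_axioms) auto
  show ?thesis
    using assms(2,3) by (rule shorter_arc_le_fat)
qed

theorem lemma2p2:
  fixes c :: real
  assumes "c > 1"
  shows "\<exists>d::real. \<forall>n v M a b sa sb.
     convex_polygon n v \<and> fat c (polygon_region n v) \<and>
     is_line M \<and> a \<noteq> b \<and> M \<inter> frontier (polygon_region n v) = {a, b} \<and>
     at_arclen n v sa a \<and> at_arclen n v sb b \<longrightarrow>
     min \<bar>sa - sb\<bar> (perimeter n v - \<bar>sa - sb\<bar>) \<le> d * dist a b"
proof (intro exI allI impI, elim conjE)
  fix n v M a b sa sb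
  assume h: "convex_polygon n v" "fat c (polygon_region n v)" "is_line M" "a \<noteq> b"
    "M \<inter> frontier (polygon_region n v) = {a, b}" "at_arclen n v sa a" "at_arclen n v sb b"
  have "0 \<le> c"
    using assms by simp
  consider "sa < sb" | "sa = sb" | "sb < sa"
    by linarith
  then show "min \<bar>sa - sb\<bar> (perimeter n v - \<bar>sa - sb\<bar>) \<le> 64 * (c + 1)\<^sup>2 * dist a b"
  proof cases
    case 1
    then show ?thesis
      using shorter_arc_le_if_fat[OF h(1,2) \<open>0 \<le> c\<close> h(3-7) 1] by simp
  next
    case 2
    then show ?thesis
      by (simp add: min_le_iff_disj)
  next
    case 3
    have "M \<inter> frontier (polygon_region n v) = {b, a}"
      using h(5) by (simp add: insert_commute)
    then show ?thesis
      using shorter_arc_le_if_fat[OF h(1,2) \<open>0 \<le> c\<close> h(3) _ _ h(7,6) 3] h(4) 3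
      by (simp add: dist_commute)
  qed
qed

end
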